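(* Fix an integer $d\ge1$ and let $S_d=\langle a_0,\dots,a_d,s\mid s a_0 s^{-1}a_0^{-1},\ a_{i+1}a_ia_{i+1}^{-1}a_0^{-1}\ (0\le i<d)\rangle$. For $0\le i<j\le d$ and $n\ge1$ let $f_{i,j}(n)=\tfrac12\,\bigl|\mathrm{vrim}(\mathrm{Fan}(a_i^n,a_j^n))\bigr|$, and set $f_{i,i}(n)=0$ for all $n$ and $f_{i,j}(0)=0$ for all $i\le j$. Then for all $n\ge1$ and $0\le i<j\le d$, \[ f_{i,j}(n)=f_{i,j-1}(n)+f_{0,j}(n-1)+1 .\]
   Context: Each relator of $S_d$ has the form $\lambda p\lambda^{-1}q^{-1}$ with $(\lambda,p,q)=(s,a_0,a_0)$ or $(a_{i+1},a_i,a_0)$. In the unit square of such a relator in the presentation complex, reading from a corner $B$: $\lambda$ goes from $B$ to $Q$, $p$ from $Q$ to the top corner $T$, $\lambda$ from $R$ to $T$, $q$ from $B$ to $R$; the edges $p,\lambda$ into $T$ are the top edges. The descending link is the graph on the generators in which $u,v$ are adjacent iff some relator square has top edges labeled $u$ and $v$; for $S_d$ it is the path $s - a_0 - a_1 - \cdots - a_d$, and each adjacent pair corresponds to a unique relator. For a relator $e$ put $x_e=q^{-1}\lambda$. Simple fans: $\mathrm{Fan}(a,a)$ is a single edge labeled $a$ (apex at its end), empty rims. For distinct generators $a,b$, let $a=v_0,\dots,v_k=b$ be the path in the descending link, take copies $C_i$ of the relator square with top edges $v_{i-1},v_i$, and glue the top edge $v_i$ of $C_i$ to that of $C_{i+1}$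 ($1\le i<k$); the common top corner is the apex. The vertex rim is the concatenation of the two-letter words read along the bottom of $C_i$ from the initial vertex of its top edge $v_{i-1}$ to the initial vertex of its top edge $v_i$ (each is $q^{-1}\lambda$ or $\lambda^{-1}q$), so it has the form $a_1^{-1}b_1\cdots a_k^{-1}b_k$; the edge rim replaces $q^{-1}\lambda$ by $x_e$ and $\lambda^{-1}q$ by $x_e^{-1}$. Fans of height $n\ge2$: for positive words $u=au'$, $v=bv'$ of length $n$ with $a,b$ generators, let $F'=\mathrm{Fan}(u',v')$ with vertex rim $a_1^{-1}b_1\cdots a_k^{-1}b_k$, put $b_0=a$, $a_{k+1}=b$, and attach for $i=1,\dots,k+1$ the simple fan $\mathrm{Fan}(b_{i-1},a_i)$ with apex at the rim vertex where the edges $b_{i-1}$ and $a_i$ terminate (for $i=1$, the initial vertex of the side $u'$, the new edge $a$ extending that side; symmetrically for $i=k+1$), identifying its top edges with the corresponding edges. This is $\mathrm{Fan}(u,v)$; its vertex and edge rims are the concatenations of those of the attached simple fans. $|w|$ is the length of a word $w$. *)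

theory Defs
  imports Complex_Main
begin

datatype gen = S | A nat

definition gens :: "nat \<Rightarrow> gen set" where
  "gens d = {S} \<union> {A i | i. i \<le> d}"

text \<open>Relators of S_d, recorded as triples (lambda, p, q) meaning lambda p lambda^-1 q^-1.\<close>
definition relators :: "nat \<Rightarrow> (gen \<times> gen \<times> gen) set" where
  "relators d = {(S, A 0, A 0)} \<union> {(A (Suc i), A i, A 0) | i. i < d}"

definition top_edges :: "gen \<times> gen \<times> gen \<Rightarrow> gen set" where
  "top_edges e = (case e of (l, p, q) \<Rightarrow> {l, p})"

definition dlink_adj :: "nat \<Rightarrow> gen \<Rightarrow> gen \<Rightarrow> bool" where
  "dlink_adj d u v \<longleftrightarrow> u \<noteq> v \<and> (\<exists>e \<in> relators d. top_edges e = {u, v})"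

text \<open>The descending link of S_d is the path s - a_0 - ... - a_d; position along it.\<close>
fun gpos :: "gen \<Rightarrow> nat" where
  "gpos S = 0"
| "gpos (A i) = Suc i"

fun gen_at :: "nat \<Rightarrow> gen" where
  "gen_at 0 = S"
| "gen_at (Suc i) = A i"

definition link_path :: "gen \<Rightarrow> gen \<Rightarrow> gen list" where
  "link_path a b = map gen_at
     (if gpos a \<le> gpos b then [gpos a..<Suc (gpos b)] else rev [gpos b..<Suc (gpos a)])"

definition rel_of :: "nat \<Rightarrow> gen \<Rightarrow> gen \<Rightarrow> gen \<times> gen \<times> gen" where
  "rel_of d u v = (THE e. e \<in> relators d \<and> top_edges e = {u, v})"

text \<open>Signed words: (x, True) is the letter x, (x, False) is x^-1.
  Bottom word of the square C with top edges x (earlier) and y (later), read from the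
  initial vertex of top edge x to the initial vertex of top edge y:
  lambda^-1 q if x = p, and q^-1 lambda if x = lambda.\<close>
definition sq_word :: "nat \<Rightarrow> gen \<Rightarrow> gen \<Rightarrow> (gen \<times> bool) list" where
  "sq_word d x y = (case rel_of d x y of (l, p, q) \<Rightarrow>
      (if x = p then [(l, False), (q, True)] else [(q, False), (l, True)]))"

definition simple_vrim :: "nat \<Rightarrow> gen \<Rightarrow> gen \<Rightarrow> (gen \<times> bool) list" where
  "simple_vrim d a b =
     (if a = b then [] else
        (let P = link_path a b in concat (map (\<lambda>(x, y). sq_word d x y) (zip P (tl P)))))"

text \<open>Read a rim a_1^-1 b_1 ... a_k^-1 b_k as the list of pairs (a_i, b_i).\<close>
fun rim_pairs :: "(gen \<times> bool) list \<Rightarrow> (gen \<times> gen) list" where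
  "rim_pairs (x # y # r) = (fst x, fst y) # rim_pairs r"
| "rim_pairs _ = []"

fun fan_vrim :: "nat \<Rightarrow> gen list \<Rightarrow> gen list \<Rightarrow> (gen \<times> bool) list" where
  "fan_vrim d (a # u') (b # v') =
     (if u' = [] then simple_vrim d a b
      else (let ps = rim_pairs (fan_vrim d u' v');
                as = map fst ps; bs = map snd ps
            in concat (map (\<lambda>(x, y). simple_vrim d x y) (zip (a # bs) (as @ [b])))))"
| "fan_vrim d _ _ = []"

definition f :: "nat \<Rightarrow> nat \<Rightarrow> nat \<Rightarrow> nat \<Rightarrow> real" where
  "f d i j n = (if i = j \<or> n = 0 then 0
     else real (length (fan_vrim d (replicate n (A i)) (replicate n (A j)))) / 2)"

end

theory Submission
  imports Defs
begin

text \<open>Each simple fan Fan(a_x, a_y) with x \<le> y has vertex rim a_{x+1}^{-1} a_0 \<cdots> a_y^{-1} a_0,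
  so every rim built from such fans is recorded by the list of indices m of its letters a_m^{-1}.
  Going up one level, each a_m^{-1} is replaced by the rim of Fan(a_0, a_m), i.e. the index m by
  1, ..., m, and the new end letter a_j contributes 1, ..., j.  Counting the indices after k such
  substitutions gives f_{i,j}(n+1) = 1 + |expand^n [i+2..j]| + f_{0,j}(n).  Splitting
  [i+2..j] = [i+2..j-1] @ [j] and using |expand^n [j]| = 1 + f_{0,j-1}(n) yields the recurrence.\<close>

definition a0_rim :: "nat list \<Rightarrow> (gen \<times> bool) list" where
  "a0_rim L = concat (map (\<lambda>m. [(A m, False), (A 0, True)]) L)"

lemma a0_rim_simps [simp]:
  "a0_rim [] = []"
  "a0_rim (m # L) = (A m, False) # (A 0, True) # a0_rim L"
  "a0_rim (L @ M) = a0_rim L @ a0_rim M"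
  by (simp_all add: a0_rim_def)

lemma a0_rim_concat: "a0_rim (concat Ls) = concat (map a0_rim Ls)"
  by (induction Ls) simp_all

lemma length_a0_rim [simp]: "length (a0_rim L) = 2 * length L"
  by (induction L) simp_all

lemma rim_pairs_a0_rim [simp]: "rim_pairs (a0_rim L) = map (\<lambda>m. (A m, A 0)) L"
  by (induction L) simp_all

lemma rel_of_A_Suc:
  assumes "Suc x \<le> d"
  shows "rel_of d (A x) (A (Suc x)) = (A (Suc x), A x, A 0)"
  unfolding rel_of_def
proof (rule the_equality)
  show "(A (Suc x), A x, A 0) \<in> relators d \<and> top_edges (A (Suc x), A x, A 0) = {A x, A (Suc x)}"
    using assms by (auto simp: relators_def top_edges_def)
next
  fix e assume e: "e \<in> relators d \<and> top_edges e = {A x, A (Suc x)}"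
  then consider "e = (S, A 0, A 0)" | i where "e = (A (Suc i), A i, A 0)"
    unfolding relators_def by blast
  then show "e = (A (Suc x), A x, A 0)"
    by cases (use e in \<open>auto simp: top_edges_def doubleton_eq_iff\<close>)
qed

lemma sq_word_A_Suc:
  "Suc x \<le> d \<Longrightarrow> sq_word d (A x) (A (Suc x)) = [(A (Suc x), False), (A 0, True)]"
  by (simp add: sq_word_def rel_of_A_Suc)

lemma link_path_A: "x \<le> y \<Longrightarrow> link_path (A x) (A y) = map A [x..<Suc y]"
  by (simp add: link_path_def map_Suc_upt[symmetric] comp_def del: upt_Suc)

lemma simple_vrim_A:
  assumes "x \<le> y" "y \<le> d"
  shows "simple_vrim d (A x) (A y) = a0_rim [Suc x..<Suc y]"
proof (cases "x = y")
  case False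
  let ?P = "map A [x..<Suc y]"
  have "zip ?P (tl ?P) = map (\<lambda>m. (A m, A (Suc m))) [x..<y]"
    by (rule nth_equalityI) (simp_all add: map_tl[symmetric] tl_upt nth_upt del: upt_Suc)
  then have "simple_vrim d (A x) (A y) = concat (map (\<lambda>m. sq_word d (A m) (A (Suc m))) [x..<y])"
    using False assms by (simp add: simple_vrim_def link_path_A Let_def comp_def del: upt_Suc)
  also have "map (\<lambda>m. sq_word d (A m) (A (Suc m))) [x..<y]
      = map (\<lambda>m. [(A (Suc m), False), (A 0, True)]) [x..<y]"
    using assms by (intro map_cong) (auto simp: sq_word_A_Suc)
  finally show ?thesis
    by (simp add: a0_rim_def map_Suc_upt[symmetric] comp_def del: upt_Suc)
qed (simp add: simple_vrim_def)

definition expand :: "nat list \<Rightarrow> nat list" where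
  "expand L = concat (map (\<lambda>m. [1..<Suc m]) L)"

lemma expand_append [simp]: "expand (L @ M) = expand L @ expand M"
  by (simp add: expand_def)

lemma expand_bounded: "\<forall>m\<in>set L. m \<le> j \<Longrightarrow> \<forall>m\<in>set (expand L). m \<le> j"
  by (auto simp: expand_def)

fun fan_tail :: "nat \<Rightarrow> nat \<Rightarrow> nat \<Rightarrow> nat list" where
  "fan_tail 0 i j = [Suc (Suc i)..<Suc j]"
| "fan_tail (Suc n) i j = expand (fan_tail n i j) @ [1..<Suc j]"

lemma fan_tail_bounded: "\<forall>m\<in>set (fan_tail n i j). m \<le> j"
  by (induction n) (auto dest: expand_bounded)

lemma fan_vrim_replicate:
  assumes "i < j" "j \<le> d"
  shows "fan_vrim d (replicate (Suc n) (A i)) (replicate (Suc n) (A j))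
    = a0_rim (Suc i # fan_tail n i j)"
proof (induction n)
  case 0
  show ?case using assms by (simp add: simple_vrim_A upt_conv_Cons del: upt_Suc)
next
  case (Suc n)
  let ?T = "fan_tail n i j"
  have zip: "zip (A 0 # map (\<lambda>_. A 0) T) (map A T @ [A j]) = map (\<lambda>m. (A 0, A m)) (T @ [j])"
    for T by (induction T) simp_all
  have fan0: "simple_vrim d (A 0) (A m) = a0_rim [1..<Suc m]" if "m \<in> set (?T @ [j])" for m
    using that fan_tail_bounded[of n i j] assms simple_vrim_A[of 0 m d] by auto
  have "fan_vrim d (A i # replicate (Suc n) (A i)) (A j # replicate (Suc n) (A j))
      = concat (map (\<lambda>(x, y). simple_vrim d x y)
          (zip (A i # A 0 # map (\<lambda>_. A 0) ?T) (A (Suc i) # map A ?T @ [A j])))"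
    by (simp only: fan_vrim.simps Suc.IH rim_pairs_a0_rim Let_def) (simp add: comp_def)
  also have "\<dots> = simple_vrim d (A i) (A (Suc i))
      @ concat (map (\<lambda>m. simple_vrim d (A 0) (A m)) (?T @ [j]))"
    by (simp only: zip_Cons_Cons zip) (simp add: comp_def)
  also have "\<dots> = a0_rim (Suc i # fan_tail (Suc n) i j)"
    using assms fan0
    by (simp add: simple_vrim_A a0_rim_concat expand_def upt_conv_Cons cong: map_cong del: upt_Suc)
  finally show ?case by (simp only: replicate_Suc)
qed

lemma f_Suc_eq_length_fan_tail:
  assumes "i < j" "j \<le> d"
  shows "f d i j (Suc n) = 1 + real (length (fan_tail n i j))"
proof -
  have "f d i j (Suc n) = real (length (a0_rim (Suc i # fan_tail n i j))) / 2"
    unfolding f_def fan_vrim_replicate[OF assms] using assms by simp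
  then show ?thesis by simp
qed

definition expanded_length :: "nat \<Rightarrow> nat list \<Rightarrow> nat" where
  "expanded_length k L = length ((expand ^^ k) L)"

lemma funpow_expand_append: "(expand ^^ k) (L @ M) = (expand ^^ k) L @ (expand ^^ k) M"
  by (induction k) simp_all

lemma expanded_length_append [simp]:
  "expanded_length k (L @ M) = expanded_length k L + expanded_length k M"
  by (simp add: expanded_length_def funpow_expand_append)

lemma expanded_length_Nil [simp]: "expanded_length k [] = 0"
  using expanded_length_append[of k "[]" "[]"] by simp

lemma expanded_length_0 [simp]: "expanded_length 0 L = length L"
  by (simp add: expanded_length_def)

lemma expanded_length_Suc: "expanded_length (Suc k) L = expanded_length k (expand L)"
  by (simp add: expanded_length_def funpow_Suc_right del: funpow.simps)

lemma expanded_length_one [simp]: "expanded_length k [1] = 1"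
proof -
  have "(expand ^^ k) [1] = [1]"
    by (induction k) (simp_all add: expand_def)
  then show ?thesis by (simp add: expanded_length_def)
qed

lemma expanded_length_fan_tail:
  "expanded_length k (fan_tail n i j)
     = expanded_length (n + k) [Suc (Suc i)..<Suc j] + (\<Sum>t<n. expanded_length (t + k) [1..<Suc j])"
proof (induction n arbitrary: k)
  case (Suc n)
  then show ?case
    by (simp add: expanded_length_Suc[symmetric] sum.lessThan_Suc_shift del: sum.lessThan_Suc)
qed simp

lemma f_0_eq_sum:
  assumes "0 < j" "j \<le> d"
  shows "f d 0 j n = real (\<Sum>t<n. expanded_length t [1..<Suc j])"
proof (cases n)
  case (Suc m)
  have "expanded_length m [1..<Suc j] = expanded_length m ([1] @ [2..<Suc j])"
    using assms by (simp add: upt_conv_Cons numeral_2_eq_2 del: upt_Suc)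
  also have "\<dots> = 1 + expanded_length m [2..<Suc j]"
    by (simp only: expanded_length_append expanded_length_one)
  finally have "expanded_length m [1..<Suc j] = 1 + expanded_length m [2..<Suc j]" .
  then show ?thesis
    using assms expanded_length_fan_tail[of 0 m 0 j]
    by (simp add: Suc f_Suc_eq_length_fan_tail numeral_2_eq_2 del: upt_Suc)
qed (simp add: f_def)

lemma f_Suc:
  assumes "i < j" "j \<le> d"
  shows "f d i j (Suc n) = 1 + real (expanded_length n [Suc (Suc i)..<Suc j]) + f d 0 j n"
  using assms expanded_length_fan_tail[of 0 n i j]
  by (simp add: f_Suc_eq_length_fan_tail f_0_eq_sum)

lemma expanded_length_singleton:
  "expanded_length n [Suc b] = 1 + (\<Sum>t<n. expanded_length t [1..<Suc b])"
proof (induction n)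
  case (Suc n)
  have "expanded_length (Suc n) [Suc b] = expanded_length n [1..<Suc b] + expanded_length n [Suc b]"
    by (simp add: expanded_length_Suc expand_def)
  then show ?case using Suc.IH by simp
qed simp

theorem mainTheorem4:
  fixes d i j n :: nat
  assumes "d \<ge> 1" and "n \<ge> 1" and "i < j" and "j \<le> d"
  shows "f d i j n = f d i (j - 1) n + f d 0 j (n - 1) + 1"
proof -
  obtain m where n: "n = Suc m" using assms(2) by (cases n) auto
  obtain b where j: "j = Suc b" using assms(3) by (cases j) auto
  have f_ij: "f d i j n = 1 + real (expanded_length m [Suc (Suc i)..<Suc j]) + f d 0 j m"
    using assms by (simp add: n f_Suc)
  show ?thesis
  proof (cases "i = b")
    case True
    have "f d i (j - 1) n = 0" by (simp add: f_def j True)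
    moreover have "[Suc (Suc i)..<Suc j] = []" using True j by simp
    ultimately show ?thesis using f_ij by (simp add: n)
  next
    case False
    then have "i < b" using assms(3) j by simp
    have "expanded_length m [Suc (Suc i)..<Suc j]
        = expanded_length m [Suc (Suc i)..<Suc b] + expanded_length m [Suc b]"
      using \<open>i < b\<close> by (simp add: j)
    moreover have "expanded_length m [Suc b] = 1 + f d 0 b m"
      using \<open>i < b\<close> assms(4) by (simp add: expanded_length_singleton f_0_eq_sum j)
    moreover have "f d i b n = 1 + real (expanded_length m [Suc (Suc i)..<Suc b]) + f d 0 b m"
      using \<open>i < b\<close> assms(4) by (simp add: n j f_Suc)
    ultimately show ?thesis using f_ij by (simp add: n j del: upt_Suc)
  qed
qed

end
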